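(* Let $M\ge1$ and let $F_1,\dots,F_M:\mathbb{R}^d\to\mathbb{R}$ be differentiable functions, each with $L$-Lipschitz continuous gradient ($L>0$) and each $\Upsilon$-strongly convex ($\Upsilon>0$). Let $w_1,\dots,w_M>0$ with $\sum_m w_m=1$, define the global loss $\mathcal{L}(\theta)=\sum_{m=1}^M w_m F_m(\theta)$ and let $\theta^*$ be its minimizer. Fix $\epsilon_{\mathrm{Local}}\in(0,1)$, $\epsilon_{\mathrm{UAV}}\in(0,1)$ and $\varrho$ with $0<\varrho\le \Upsilon/L$. Let $\theta[0]\in\mathbb{R}^d$ and generate a sequence as follows: given $\theta[n]$, for each $m$ define the local objective $$G_{m,n}(h)=F_m(\theta[n]+h)-\bigl(\nabla F_m(\theta[n])-\varrho\nabla\mathcal{L}(\theta[n])\bigr)^{\mathsf T}h,$$ let $h_m[n]$ be any vector satisfying $$G_{m,n}(h_m[n])-\min_h G_{m,n}(h)\le \epsilon_{\mathrm{Local}}\Bigl(G_{m,n}(0)-\min_h G_{m,n}(h)\Bigr),$$ and set $\theta[n+1]=\theta[n]+\frac{1}{M}\sum_{m=1}^M h_m[n]$. Define $$\check N=\frac{2L^2}{\Upsilon^2\varrho(1-\epsilon_{\mathrm{Local}})}\ln\!\left(\frac{1}{\epsilon_{\mathrm{UAV}}}\right).$$ Then for every integer $n\ge\check N$, $$\mathcal{L}(\theta[n])-\mathcal{L}(\theta^* )\le\epsilon_{\mathrm{UAV}}\bigl(\mathcal{L}(\theta[0])-\mathcal{L}(\theta^* )\bigr),$$ i.e. $\check N$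 global (UAV) aggregation rounds suffice to reach global accuracy $\epsilon_{\mathrm{UAV}}$.
   Context: This models federated learning with $M$ IoT devices and a UAV acting as aggregation server: $F_m$ is the local loss of device $m$ on its dataset $\mathcal{D}_m$, the weights are $w_m=|\mathcal{D}_m|/\sum_k|\mathcal{D}_k|$, $h_m[n]$ is the local model update of device $m$ computed to local accuracy $\epsilon_{\mathrm{Local}}$, and the UAV aggregates by averaging the updates. $\Upsilon$-strong convexity means $F(y)\ge F(x)+\nabla F(x)^{\mathsf T}(y-x)+\frac{\Upsilon}{2}\|y-x\|^2$ for all $x,y$. *)

theory Defs
  imports "HOL-Analysis.Analysis"
begin

definition has_gradient_everywhere :: "('a::euclidean_space \<Rightarrow> real) \<Rightarrow> ('a \<Rightarrow> 'a) \<Rightarrow> bool" where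
  "has_gradient_everywhere f g \<longleftrightarrow> (\<forall>x. (f has_derivative (\<lambda>h. g x \<bullet> h)) (at x))"

definition strongly_convex_grad :: "real \<Rightarrow> ('a::euclidean_space \<Rightarrow> real) \<Rightarrow> ('a \<Rightarrow> 'a) \<Rightarrow> bool" where
  "strongly_convex_grad U f g \<longleftrightarrow>
     (\<forall>x y. f y \<ge> f x + g x \<bullet> (y - x) + U / 2 * (norm (y - x))\<^sup>2)"

definition lipschitz_grad :: "real \<Rightarrow> ('a::euclidean_space \<Rightarrow> 'a) \<Rightarrow> bool" where
  "lipschitz_grad L g \<longleftrightarrow> (\<forall>x y. norm (g x - g y) \<le> L * norm (x - y))"

end

(*
  Write Loss for the global loss, x for the current global iterate and g = grad Loss(x).
  The tilted local objective G of device m has gradient rho g at 0, so L-smoothness gives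
  G 0 - inf G >= rho^2 |g|^2 / (2 L), and the local accuracy condition makes G decrease by a
  (1 - eps_Local) fraction of this along the local step h_m.  Since rho L <= Upsilon, the strong
  convexity of F_m dominates the smoothness of Loss along h_m, whence
  Loss(x + h_m) - Loss(x) <= -(1 - eps_Local) rho |g|^2 / (2 L).  The Polyak-Lojasiewicz inequality
  |g|^2 >= 2 Upsilon (Loss(x) - Loss(y)) turns this into a contraction of the optimality gap by the
  factor 1 - (1 - eps_Local) rho Upsilon / L for every device, and by convexity of Loss the averaged
  update contracts at least as well.  The stated round count exceeds ln(1/eps_UAV) divided by this
  rate by the factor 2 L / Upsilon.
*)
theory Submission
  imports Defs
begin

lemma lipschitz_grad_quadratic_upper_bound:
  fixes f :: "'a::euclidean_space \<Rightarrow> real"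
  assumes grad: "has_gradient_everywhere f g" and lip: "lipschitz_grad L g"
  shows "f y \<le> f x + g x \<bullet> (y - x) + L / 2 * (norm (y - x))\<^sup>2"
proof -
  define d where "d = y - x"
  define \<phi> where "\<phi> t = f (x + t *\<^sub>R d) - t * (g x \<bullet> d) - L / 2 * t\<^sup>2 * (norm d)\<^sup>2" for t
  have \<phi>_deriv: "DERIV \<phi> t :> g (x + t *\<^sub>R d) \<bullet> d - g x \<bullet> d - L * t * (norm d)\<^sup>2" for t
  proof -
    have "((\<lambda>t. x + t *\<^sub>R d) has_derivative (\<lambda>s. s *\<^sub>R d)) (at t)"
      by (auto intro!: derivative_eq_intros)
    moreover have "(f has_derivative (\<lambda>h. g (x + t *\<^sub>R d) \<bullet> h)) (at (x + t *\<^sub>R d))"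
      using grad unfolding has_gradient_everywhere_def by blast
    ultimately have "((\<lambda>t. f (x + t *\<^sub>R d)) has_derivative (\<lambda>s. g (x + t *\<^sub>R d) \<bullet> (s *\<^sub>R d))) (at t)"
      by (rule has_derivative_compose)
    then have f_deriv: "((\<lambda>t. f (x + t *\<^sub>R d)) has_real_derivative g (x + t *\<^sub>R d) \<bullet> d) (at t)"
      by (simp add: has_field_derivative_def mult.commute[of _ "g (x + t *\<^sub>R d) \<bullet> d"])
    show ?thesis
      unfolding \<phi>_def by (rule derivative_eq_intros f_deriv refl | simp)+
  qed
  have "\<phi> 1 \<le> \<phi> 0"
  proof (rule DERIV_nonpos_imp_nonincreasing[of 0 1 \<phi>])
    fix t :: real
    assume t: "0 \<le> t" "t \<le> 1"
    have "g (x + t *\<^sub>R d) \<bullet> d - g x \<bullet> d = (g (x + t *\<^sub>R d) - g x) \<bullet> d"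
      by (simp add: inner_diff_left)
    also have "\<dots> \<le> norm (g (x + t *\<^sub>R d) - g x) * norm d"
      by (rule norm_cauchy_schwarz)
    also have "\<dots> \<le> L * norm (t *\<^sub>R d) * norm d"
      using lip unfolding lipschitz_grad_def by (metis add_diff_cancel_left' mult_right_mono norm_ge_zero)
    also have "\<dots> = L * t * (norm d)\<^sup>2"
      using t by (simp add: power2_eq_square)
    finally show "\<exists>y. DERIV \<phi> t :> y \<and> y \<le> 0"
      using \<phi>_deriv by force
  qed simp
  then show ?thesis
    unfolding \<phi>_def d_def by (simp add: algebra_simps)
qed

lemma strongly_convex_grad_le_lipschitz:
  fixes f :: "'a::euclidean_space \<Rightarrow> real"
  assumes grad: "has_gradient_everywhere f g" and lip: "lipschitz_grad L g"
    and sconv: "strongly_convex_grad U f g"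
  shows "U \<le> L"
proof -
  obtain e :: 'a where "e \<in> Basis"
    using nonempty_Basis by blast
  then have e: "(norm (e - 0))\<^sup>2 = 1"
    by simp
  have "f 0 + g 0 \<bullet> (e - 0) + U / 2 * (norm (e - 0))\<^sup>2 \<le> f e"
    using sconv unfolding strongly_convex_grad_def by blast
  moreover have "f e \<le> f 0 + g 0 \<bullet> (e - 0) + L / 2 * (norm (e - 0))\<^sup>2"
    by (rule lipschitz_grad_quadratic_upper_bound[OF grad lip])
  ultimately show ?thesis
    unfolding e by linarith
qed

lemma strongly_convex_grad_imp_convex_on:
  fixes f :: "'a::euclidean_space \<Rightarrow> real"
  assumes "strongly_convex_grad U f g" "0 \<le> U"
  shows "convex_on UNIV f"
proof (rule convex_onI)
  fix t :: real and x y :: 'a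
  define z where "z = (1 - t) *\<^sub>R x + t *\<^sub>R y"
  assume t: "0 < t" "t < 1"
  have tangent: "f z + g z \<bullet> (v - z) \<le> f v" for v
  proof -
    have "0 \<le> U / 2 * (norm (v - z))\<^sup>2"
      using assms(2) by simp
    then show ?thesis
      using assms(1)[unfolded strongly_convex_grad_def, rule_format, of z v] by linarith
  qed
  have "(1 - t) * (f z + g z \<bullet> (x - z)) + t * (f z + g z \<bullet> (y - z)) \<le> (1 - t) * f x + t * f y"
    using t by (intro add_mono mult_left_mono tangent) auto
  moreover have "(1 - t) * (g z \<bullet> (x - z)) + t * (g z \<bullet> (y - z)) = 0"
    unfolding z_def by (simp add: algebra_simps)
  ultimately show "f ((1 - t) *\<^sub>R x + t *\<^sub>R y) \<le> (1 - t) * f x + t * f y"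
    unfolding z_def by (simp add: algebra_simps)
qed simp

lemma strongly_convex_grad_gap_le:
  fixes f :: "'a::euclidean_space \<Rightarrow> real"
  assumes "strongly_convex_grad U f g" "0 < U"
  shows "f x - f y \<le> (norm (g x))\<^sup>2 / (2 * U)"
proof -
  define r where "r = norm (y - x)"
  have "0 \<le> (U * r - norm (g x))\<^sup>2 / (2 * U)"
    using assms(2) by simp
  also have "\<dots> = U / 2 * r\<^sup>2 - norm (g x) * r + (norm (g x))\<^sup>2 / (2 * U)"
    using assms(2) by (simp add: field_simps power2_eq_square)
  finally have "- (norm (g x))\<^sup>2 / (2 * U) \<le> U / 2 * r\<^sup>2 - norm (g x) * r"
    by simp
  moreover have "- (norm (g x) * r) \<le> g x \<bullet> (y - x)"
    using norm_cauchy_schwarz[of "- g x" "y - x"] unfolding r_def by simp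
  moreover have "f x + g x \<bullet> (y - x) + U / 2 * r\<^sup>2 \<le> f y"
    using assms(1) unfolding strongly_convex_grad_def r_def by blast
  ultimately show ?thesis
    by simp
qed

lemma strongly_convex_grad_bdd_below:
  fixes f :: "'a::euclidean_space \<Rightarrow> real"
  assumes "strongly_convex_grad U f g" "0 < U"
  shows "bdd_below (range f)"
  using strongly_convex_grad_gap_le[OF assms, of 0]
  by (intro bdd_belowI2[where m = "f 0 - (norm (g 0))\<^sup>2 / (2 * U)"]) (simp add: algebra_simps)

lemma lipschitz_grad_gap_to_Inf_ge:
  fixes f :: "'a::euclidean_space \<Rightarrow> real"
  assumes grad: "has_gradient_everywhere f g" and lip: "lipschitz_grad L g"
    and "0 < L" and bdd: "bdd_below (range f)"
  shows "(norm (g x))\<^sup>2 / (2 * L) \<le> f x - (INF y. f y)"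
proof -
  define y where "y = x - (1 / L) *\<^sub>R g x"
  have "(INF y. f y) \<le> f y"
    using bdd by (rule cINF_lower) simp
  also have "\<dots> \<le> f x + g x \<bullet> (y - x) + L / 2 * (norm (y - x))\<^sup>2"
    by (rule lipschitz_grad_quadratic_upper_bound[OF grad lip])
  also have "\<dots> = f x - (norm (g x))\<^sup>2 / (2 * L)"
  proof -
    have "g x \<bullet> (y - x) = - (norm (g x))\<^sup>2 / L"
      unfolding y_def by (simp add: power2_norm_eq_inner)
    moreover have "(norm (y - x))\<^sup>2 = (norm (g x))\<^sup>2 / L\<^sup>2"
      unfolding y_def using \<open>0 < L\<close> by (simp add: power_divide)
    ultimately show ?thesis
      using \<open>0 < L\<close> by (simp add: field_simps power2_eq_square)
  qed
  finally show ?thesis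
    by simp
qed

lemma has_gradient_everywhere_tilt:
  assumes "has_gradient_everywhere f g"
  shows "has_gradient_everywhere (\<lambda>v. f (x + v) - b \<bullet> v) (\<lambda>v. g (x + v) - b)"
  unfolding has_gradient_everywhere_def
proof
  fix v
  have "((\<lambda>v. x + v) has_derivative (\<lambda>h. h)) (at v)"
    by (auto intro!: derivative_eq_intros)
  moreover have "(f has_derivative (\<lambda>h. g (x + v) \<bullet> h)) (at (x + v))"
    using assms unfolding has_gradient_everywhere_def by blast
  ultimately have "((\<lambda>v. f (x + v)) has_derivative (\<lambda>h. g (x + v) \<bullet> h)) (at v)"
    using has_derivative_compose by fastforce
  then show "((\<lambda>v. f (x + v) - b \<bullet> v) has_derivative (\<lambda>h. (g (x + v) - b) \<bullet> h)) (at v)"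
    by (auto intro!: derivative_eq_intros simp: inner_diff_left)
qed

lemma lipschitz_grad_tilt:
  assumes "lipschitz_grad L g"
  shows "lipschitz_grad L (\<lambda>v. g (x + v) - b)"
  using assms unfolding lipschitz_grad_def by (metis add_diff_cancel_left diff_diff_eq2 diff_add_cancel)

lemma strongly_convex_grad_tilt:
  assumes "strongly_convex_grad U f g"
  shows "strongly_convex_grad U (\<lambda>v. f (x + v) - b \<bullet> v) (\<lambda>v. g (x + v) - b)"
  unfolding strongly_convex_grad_def
proof (intro allI)
  fix u v
  have "f (x + u) + g (x + u) \<bullet> ((x + v) - (x + u)) + U / 2 * (norm ((x + v) - (x + u)))\<^sup>2 \<le> f (x + v)"
    using assms unfolding strongly_convex_grad_def by blast
  then show "f (x + u) - b \<bullet> u + (g (x + u) - b) \<bullet> (v - u) + U / 2 * (norm (v - u))\<^sup>2 \<le> f (x + v) - b \<bullet> v"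
    by (simp add: algebra_simps)
qed

lemma has_gradient_everywhere_weighted_sum:
  assumes "\<And>m. m \<in> A \<Longrightarrow> has_gradient_everywhere (f m) (g m)"
  shows "has_gradient_everywhere (\<lambda>x. \<Sum>m\<in>A. w m * f m x) (\<lambda>x. \<Sum>m\<in>A. w m *\<^sub>R g m x)"
  unfolding has_gradient_everywhere_def
proof
  fix x
  have "((\<lambda>x. \<Sum>m\<in>A. w m * f m x) has_derivative (\<lambda>h. \<Sum>m\<in>A. w m * (g m x \<bullet> h))) (at x)"
    using assms unfolding has_gradient_everywhere_def
    by (intro has_derivative_sum has_derivative_mult_right) blast
  then show "((\<lambda>x. \<Sum>m\<in>A. w m * f m x) has_derivative (\<lambda>h. (\<Sum>m\<in>A. w m *\<^sub>R g m x) \<bullet> h)) (at x)"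
    by (simp add: inner_sum_left)
qed

lemma lipschitz_grad_weighted_sum:
  assumes "\<And>m. m \<in> A \<Longrightarrow> lipschitz_grad L (g m)"
    and "\<And>m. m \<in> A \<Longrightarrow> 0 \<le> w m" and "sum w A = 1"
  shows "lipschitz_grad L (\<lambda>x. \<Sum>m\<in>A. w m *\<^sub>R g m x)"
  unfolding lipschitz_grad_def
proof (intro allI)
  fix x y
  have "norm ((\<Sum>m\<in>A. w m *\<^sub>R g m x) - (\<Sum>m\<in>A. w m *\<^sub>R g m y))
      = norm (\<Sum>m\<in>A. w m *\<^sub>R (g m x - g m y))"
    by (simp add: sum_subtractf scaleR_diff_right)
  also have "\<dots> \<le> (\<Sum>m\<in>A. w m * norm (g m x - g m y))"
    using assms(2) by (intro order.trans[OF norm_sum]) (simp add: sum_mono)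
  also have "\<dots> \<le> (\<Sum>m\<in>A. w m * (L * norm (x - y)))"
    using assms(1,2) unfolding lipschitz_grad_def by (intro sum_mono mult_left_mono) auto
  also have "\<dots> = L * norm (x - y)"
    using assms(3) by (simp add: sum_distrib_right[symmetric])
  finally show "norm ((\<Sum>m\<in>A. w m *\<^sub>R g m x) - (\<Sum>m\<in>A. w m *\<^sub>R g m y)) \<le> L * norm (x - y)" .
qed

lemma strongly_convex_grad_weighted_sum:
  assumes "\<And>m. m \<in> A \<Longrightarrow> strongly_convex_grad U (f m) (g m)"
    and "\<And>m. m \<in> A \<Longrightarrow> 0 \<le> w m" and "sum w A = 1"
  shows "strongly_convex_grad U (\<lambda>x. \<Sum>m\<in>A. w m * f m x) (\<lambda>x. \<Sum>m\<in>A. w m *\<^sub>R g m x)"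
  unfolding strongly_convex_grad_def
proof (intro allI)
  fix x y
  have "(\<Sum>m\<in>A. w m * (f m x + g m x \<bullet> (y - x) + U / 2 * (norm (y - x))\<^sup>2)) \<le> (\<Sum>m\<in>A. w m * f m y)"
    using assms(1,2) unfolding strongly_convex_grad_def by (intro sum_mono mult_left_mono) auto
  moreover have "(\<Sum>m\<in>A. w m * (f m x + g m x \<bullet> (y - x) + U / 2 * (norm (y - x))\<^sup>2))
      = (\<Sum>m\<in>A. w m * f m x) + (\<Sum>m\<in>A. w m *\<^sub>R g m x) \<bullet> (y - x) + U / 2 * (norm (y - x))\<^sup>2"
  proof -
    have "(\<Sum>m\<in>A. w m * (f m x + g m x \<bullet> (y - x) + U / 2 * (norm (y - x))\<^sup>2))
        = (\<Sum>m\<in>A. w m * f m x) + (\<Sum>m\<in>A. w m * (g m x \<bullet> (y - x)))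
          + (\<Sum>m\<in>A. w m) * (U / 2 * (norm (y - x))\<^sup>2)"
      by (simp add: distrib_left sum.distrib sum_distrib_right)
    then show ?thesis
      using assms(3) by (simp add: inner_sum_left)
  qed
  ultimately show "(\<Sum>m\<in>A. w m * f m x) + (\<Sum>m\<in>A. w m *\<^sub>R g m x) \<bullet> (y - x) + U / 2 * (norm (y - x))\<^sup>2
      \<le> (\<Sum>m\<in>A. w m * f m y)"
    by simp
qed

lemma tilted_gap_to_Inf_ge:
  fixes F :: "'a::euclidean_space \<Rightarrow> real"
  assumes grad_F: "has_gradient_everywhere F gF" and lip_F: "lipschitz_grad L gF"
    and sconv_F: "strongly_convex_grad U F gF" and "0 < L" "0 < U"
  shows "(norm c)\<^sup>2 / (2 * L) \<le> F x - (INF v. F (x + v) - (gF x - c) \<bullet> v)"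
  using lipschitz_grad_gap_to_Inf_ge[OF has_gradient_everywhere_tilt[OF grad_F, of x "gF x - c"]
      lipschitz_grad_tilt[OF lip_F, of x "gF x - c"] \<open>0 < L\<close>
      strongly_convex_grad_bdd_below[OF strongly_convex_grad_tilt[OF sconv_F, of x "gF x - c"] \<open>0 < U\<close>], of 0]
  by simp

lemma inexact_local_update_decrease:
  fixes f F :: "'a::euclidean_space \<Rightarrow> real"
  assumes grad: "has_gradient_everywhere f g" and lip: "lipschitz_grad L g"
    and grad_F: "has_gradient_everywhere F gF" and lip_F: "lipschitz_grad L gF"
    and sconv_F: "strongly_convex_grad U F gF"
    and "0 < L" "0 < U" "0 < rho" "rho * L \<le> U" "eps \<le> 1"
    and acc: "let G = (\<lambda>v. F (x + v) - (gF x - rho *\<^sub>R g x) \<bullet> v)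
              in G hh - (INF v. G v) \<le> eps * (G 0 - (INF v. G v))"
  shows "f (x + hh) - f x \<le> - (1 - eps) * rho * (norm (g x))\<^sup>2 / (2 * L)"
proof -
  define G where "G = (\<lambda>v. F (x + v) - (gF x - rho *\<^sub>R g x) \<bullet> v)"
  have acc_G: "G hh - (INF v. G v) \<le> eps * (G 0 - (INF v. G v))"
    using acc by (simp only: Let_def G_def)
  have "rho\<^sup>2 * (norm (g x))\<^sup>2 / (2 * L) \<le> G 0 - (INF v. G v)"
    using tilted_gap_to_Inf_ge[OF grad_F lip_F sconv_F \<open>0 < L\<close> \<open>0 < U\<close>, of "rho *\<^sub>R g x" x] \<open>0 < rho\<close>
    unfolding G_def by (simp add: power_mult_distrib)
  then have "(1 - eps) * (rho\<^sup>2 * (norm (g x))\<^sup>2 / (2 * L)) \<le> (1 - eps) * (G 0 - (INF v. G v))"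
    using \<open>eps \<le> 1\<close> by (intro mult_left_mono) auto
  with acc_G have "G hh - G 0 \<le> - (1 - eps) * (rho\<^sup>2 * (norm (g x))\<^sup>2 / (2 * L))"
    by (simp only: mult_minus_left right_diff_distrib left_diff_distrib mult_1_left)
  moreover have "rho * (f (x + hh) - f x) \<le> G hh - G 0"
  proof -
    have "rho * (f (x + hh) - f x) \<le> rho * (g x \<bullet> hh + L / 2 * (norm hh)\<^sup>2)"
      using lipschitz_grad_quadratic_upper_bound[OF grad lip, of "x + hh" x] \<open>0 < rho\<close> by simp
    also have "\<dots> \<le> rho * (g x \<bullet> hh) + U / 2 * (norm hh)\<^sup>2"
      using mult_right_mono[OF \<open>rho * L \<le> U\<close>, of "(norm hh)\<^sup>2"] by (simp add: algebra_simps)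
    also have "\<dots> \<le> G hh - G 0"
      using sconv_F[unfolded strongly_convex_grad_def, rule_format, of x "x + hh"]
      unfolding G_def by (simp add: inner_diff_left)
    finally show ?thesis .
  qed
  moreover have "- (1 - eps) * (rho\<^sup>2 * (norm (g x))\<^sup>2 / (2 * L))
      = rho * (- (1 - eps) * rho * (norm (g x))\<^sup>2 / (2 * L))"
    by (simp add: power2_eq_square)
  ultimately have "rho * (f (x + hh) - f x) \<le> rho * (- (1 - eps) * rho * (norm (g x))\<^sup>2 / (2 * L))"
    by linarith
  then show ?thesis
    using \<open>0 < rho\<close> by (rule mult_left_le_imp_le)
qed

lemma inexact_local_update_contraction:
  fixes f F :: "'a::euclidean_space \<Rightarrow> real"
  assumes grad: "has_gradient_everywhere f g" and lip: "lipschitz_grad L g"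
    and sconv: "strongly_convex_grad U f g"
    and grad_F: "has_gradient_everywhere F gF" and lip_F: "lipschitz_grad L gF"
    and sconv_F: "strongly_convex_grad U F gF"
    and "0 < L" "0 < U" "0 < rho" "rho * L \<le> U" "eps \<le> 1"
    and acc: "let G = (\<lambda>v. F (x + v) - (gF x - rho *\<^sub>R g x) \<bullet> v)
              in G hh - (INF v. G v) \<le> eps * (G 0 - (INF v. G v))"
  shows "f (x + hh) - f y \<le> (1 - (1 - eps) * rho * U / L) * (f x - f y)"
proof -
  have "(1 - eps) * rho * U / L * (f x - f y) \<le> (1 - eps) * rho * U / L * ((norm (g x))\<^sup>2 / (2 * U))"
    using strongly_convex_grad_gap_le[OF sconv \<open>0 < U\<close>] assms(7-11)
    by (intro mult_left_mono) auto
  also have "\<dots> = (1 - eps) * rho * (norm (g x))\<^sup>2 / (2 * L)"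
    using \<open>0 < U\<close> \<open>0 < L\<close> by (simp add: field_simps)
  finally have "(1 - eps) * rho * U / L * (f x - f y) \<le> (1 - eps) * rho * (norm (g x))\<^sup>2 / (2 * L)" .
  moreover have "(1 - (1 - eps) * rho * U / L) * (f x - f y)
      = (f x - f y) - (1 - eps) * rho * U / L * (f x - f y)"
    by (simp only: left_diff_distrib mult_1_left)
  ultimately show ?thesis
    using inexact_local_update_decrease[OF grad lip grad_F lip_F sconv_F assms(7-11) acc]
    by linarith
qed

lemma averaged_update_le:
  fixes f :: "'a::real_vector \<Rightarrow> real"
  assumes "finite A" "A \<noteq> {}" "convex_on UNIV f" "\<And>m. m \<in> A \<Longrightarrow> f (x + d m) \<le> b"
  shows "f (x + (1 / real (card A)) *\<^sub>R (\<Sum>m\<in>A. d m)) \<le> b"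
proof -
  have card: "real (card A) > 0"
    using assms(1,2) by (simp add: card_gt_0_iff)
  have "(\<Sum>m\<in>A. (1 / real (card A)) *\<^sub>R (x + d m))
      = (1 / real (card A)) *\<^sub>R (real (card A) *\<^sub>R x + (\<Sum>m\<in>A. d m))"
    by (simp add: sum.distrib sum_constant_scaleR flip: scaleR_sum_right)
  also have "\<dots> = x + (1 / real (card A)) *\<^sub>R (\<Sum>m\<in>A. d m)"
    using card by (simp add: scaleR_add_right)
  finally have "x + (1 / real (card A)) *\<^sub>R (\<Sum>m\<in>A. d m) = (\<Sum>m\<in>A. (1 / real (card A)) *\<^sub>R (x + d m))"
    by simp
  also have "f \<dots> \<le> (\<Sum>m\<in>A. 1 / real (card A) * f (x + d m))"
    using assms(1-3) card by (intro convex_on_sum) auto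
  also have "\<dots> \<le> (\<Sum>m\<in>A. 1 / real (card A) * b)"
    using assms(4) card by (intro sum_mono mult_left_mono) auto
  also have "\<dots> = b"
    using card by simp
  finally show ?thesis .
qed

lemma inexact_federated_round_contraction:
  fixes f :: "'a::euclidean_space \<Rightarrow> real" and F :: "'i \<Rightarrow> 'a \<Rightarrow> real"
  assumes "finite A" "A \<noteq> {}"
    and grad: "has_gradient_everywhere f g" and lip: "lipschitz_grad L g"
    and sconv: "strongly_convex_grad U f g"
    and grad_F: "\<And>m. m \<in> A \<Longrightarrow> has_gradient_everywhere (F m) (gF m)"
    and lip_F: "\<And>m. m \<in> A \<Longrightarrow> lipschitz_grad L (gF m)"
    and sconv_F: "\<And>m. m \<in> A \<Longrightarrow> strongly_convex_grad U (F m) (gF m)"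
    and "0 < L" "0 < U" "0 < rho" "rho * L \<le> U" "eps \<le> 1"
    and acc: "\<And>m. m \<in> A \<Longrightarrow>
        let G = (\<lambda>v. F m (x + v) - (gF m x - rho *\<^sub>R g x) \<bullet> v)
        in G (d m) - (INF v. G v) \<le> eps * (G 0 - (INF v. G v))"
  shows "f (x + (1 / real (card A)) *\<^sub>R (\<Sum>m\<in>A. d m)) - f y
      \<le> (1 - (1 - eps) * rho * U / L) * (f x - f y)"
proof -
  have "f (x + (1 / real (card A)) *\<^sub>R (\<Sum>m\<in>A. d m))
      \<le> f y + (1 - (1 - eps) * rho * U / L) * (f x - f y)"
  proof (rule averaged_update_le)
    show "convex_on UNIV f"
      using sconv \<open>0 < U\<close> by (simp add: strongly_convex_grad_imp_convex_on)
    show "f (x + d m) \<le> f y + (1 - (1 - eps) * rho * U / L) * (f x - f y)" if "m \<in> A" for m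
      using inexact_local_update_contraction[OF grad lip sconv grad_F[OF that] lip_F[OF that]
          sconv_F[OF that] assms(9-13) acc[OF that], of y]
      by linarith
  qed (use assms(1,2) in auto)
  then show ?thesis
    by simp
qed

lemma geometric_decay:
  fixes a :: "nat \<Rightarrow> real"
  assumes "\<And>n. a (Suc n) \<le> q * a n" "0 \<le> q"
  shows "a n \<le> q ^ n * a 0"
proof (induction n)
  case (Suc n)
  have "a (Suc n) \<le> q * a n"
    by (rule assms(1))
  also have "\<dots> \<le> q * (q ^ n * a 0)"
    using Suc.IH assms(2) by (rule mult_left_mono)
  finally show ?case
    by (simp add: mult.assoc)
qed simp

lemma one_minus_power_le:
  fixes c e :: real
  assumes "0 < c" "c \<le> 1" "0 < e" "ln (1 / e) / c \<le> real n"
  shows "(1 - c) ^ n \<le> e"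
proof -
  have "(1 - c) ^ n \<le> exp (- c) ^ n"
    using assms(2) exp_ge_add_one_self[of "- c"] by (intro power_mono) auto
  also have "\<dots> = exp (- (c * real n))"
    by (simp add: exp_of_nat_mult[symmetric] mult.commute)
  also have "\<dots> \<le> exp (ln e)"
  proof -
    have "- (c * real n) \<le> ln e"
      using assms by (simp add: field_simps ln_div)
    then show ?thesis
      by simp
  qed
  also have "\<dots> = e"
    using assms(3) by simp
  finally show ?thesis .
qed

lemma linear_convergence_after_rounds:
  fixes a :: "nat \<Rightarrow> real"
  assumes "\<And>n. a (Suc n) \<le> (1 - c) * a n" "0 < c" "c \<le> 1" "0 < e" "0 \<le> a 0"
    and "ln (1 / e) / c \<le> real n"
  shows "a n \<le> e * a 0"
proof -
  have "a n \<le> (1 - c) ^ n * a 0"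
    using assms(3) by (intro geometric_decay[where a = a and q = "1 - c", OF assms(1)]) simp
  also have "\<dots> \<le> e * a 0"
    using one_minus_power_le[OF assms(2,3,4,6)] assms(5) by (rule mult_right_mono)
  finally show ?thesis .
qed

lemma inexact_rate_bounds:
  fixes eps rho U L :: real
  assumes "0 < eps" "eps < 1" "0 < rho" "rho * L \<le> U" "0 < U" "U \<le> L"
  shows "0 < (1 - eps) * rho * U / L" "(1 - eps) * rho * U / L \<le> 1"
proof -
  show "0 < (1 - eps) * rho * U / L"
    using assms by simp
  have "rho * L \<le> 1 * L"
    using assms(4,6) by linarith
  then have "rho \<le> 1"
    using assms(5,6) by (rule mult_right_le_imp_le[OF _ less_le_trans])
  have "(1 - eps) * (rho * U) \<le> rho * U"
    using assms(1,2,3,5) by (intro mult_left_le_one_le) auto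
  also have "\<dots> \<le> U"
    using \<open>rho \<le> 1\<close> assms(3,5) by (intro mult_left_le_one_le) auto
  also have "\<dots> \<le> L"
    by (rule assms(6))
  finally show "(1 - eps) * rho * U / L \<le> 1"
    using assms(5,6) by (simp add: mult.assoc)
qed

lemma round_count_ge_ln_div_rate:
  fixes eps rho U L e :: real
  assumes "0 < eps" "eps < 1" "0 < rho" "0 < U" "U \<le> L" "0 < e" "e < 1"
  shows "ln (1 / e) / ((1 - eps) * rho * U / L) \<le> 2 * L\<^sup>2 / (U\<^sup>2 * rho * (1 - eps)) * ln (1 / e)"
proof -
  have "ln (1 / e) / ((1 - eps) * rho * U / L)
      = U / (2 * L) * (2 * L\<^sup>2 / (U\<^sup>2 * rho * (1 - eps)) * ln (1 / e))"
    using assms(1-5) by (simp add: field_simps power2_eq_square)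
  also have "\<dots> \<le> 2 * L\<^sup>2 / (U\<^sup>2 * rho * (1 - eps)) * ln (1 / e)"
  proof (rule mult_left_le_one_le)
    show "0 \<le> 2 * L\<^sup>2 / (U\<^sup>2 * rho * (1 - eps)) * ln (1 / e)"
      using assms(2,3,4,6,7) by (intro mult_nonneg_nonneg divide_nonneg_pos) auto
    show "0 \<le> U / (2 * L)" "U / (2 * L) \<le> 1"
      using assms(4,5) by auto
  qed
  finally show ?thesis .
qed

theorem proposition2:
  fixes M :: nat
    and F :: "nat \<Rightarrow> 'a::euclidean_space \<Rightarrow> real"
    and gF :: "nat \<Rightarrow> 'a \<Rightarrow> 'a"
    and w :: "nat \<Rightarrow> real"
    and L Ups eps_loc eps_uav rho :: real
    and theta_star :: 'a
    and theta :: "nat \<Rightarrow> 'a"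
    and h :: "nat \<Rightarrow> nat \<Rightarrow> 'a"
  assumes M_pos: "M \<ge> 1"
    and grad: "\<And>m. m \<in> {1..M} \<Longrightarrow> has_gradient_everywhere (F m) (gF m)"
    and L_pos: "L > 0"
    and lip: "\<And>m. m \<in> {1..M} \<Longrightarrow> lipschitz_grad L (gF m)"
    and Ups_pos: "Ups > 0"
    and sconv: "\<And>m. m \<in> {1..M} \<Longrightarrow> strongly_convex_grad Ups (F m) (gF m)"
    and w_pos: "\<And>m. m \<in> {1..M} \<Longrightarrow> w m > 0"
    and w_sum: "(\<Sum>m=1..M. w m) = 1"
    and minimizer: "\<And>x. (\<Sum>m=1..M. w m * F m theta_star) \<le> (\<Sum>m=1..M. w m * F m x)"
    and eps_loc: "0 < eps_loc" "eps_loc < 1"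
    and eps_uav: "0 < eps_uav" "eps_uav < 1"
    and rho: "0 < rho" "rho \<le> Ups / L"
    and local_acc: "\<And>n m. m \<in> {1..M} \<Longrightarrow>
        (let G = (\<lambda>v. F m (theta n + v)
                      - (gF m (theta n) - rho *\<^sub>R (\<Sum>k=1..M. w k *\<^sub>R gF k (theta n))) \<bullet> v)
         in G (h m n) - (INF v. G v) \<le> eps_loc * (G 0 - (INF v. G v)))"
    and update: "\<And>n. theta (Suc n) = theta n + (1 / real M) *\<^sub>R (\<Sum>m=1..M. h m n)"
  shows "\<forall>n::nat. real n \<ge> 2 * L\<^sup>2 / (Ups\<^sup>2 * rho * (1 - eps_loc)) * ln (1 / eps_uav) \<longrightarrow>
           (\<Sum>m=1..M. w m * F m (theta n)) - (\<Sum>m=1..M. w m * F m theta_star)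
             \<le> eps_uav * ((\<Sum>m=1..M. w m * F m (theta 0)) - (\<Sum>m=1..M. w m * F m theta_star))"
proof -
  define Lf where "Lf x = (\<Sum>m=1..M. w m * F m x)" for x
  define gL where "gL x = (\<Sum>m=1..M. w m *\<^sub>R gF m x)" for x
  define c where "c = (1 - eps_loc) * rho * Ups / L"
  have w_nonneg: "\<And>m. m \<in> {1..M} \<Longrightarrow> 0 \<le> w m"
    using w_pos by (simp add: less_imp_le)
  have grad_L: "has_gradient_everywhere Lf gL"
    unfolding Lf_def[abs_def] gL_def[abs_def] using grad by (rule has_gradient_everywhere_weighted_sum)
  have lip_L: "lipschitz_grad L gL"
    unfolding gL_def[abs_def] using lip w_nonneg w_sum by (rule lipschitz_grad_weighted_sum)
  have sconv_L: "strongly_convex_grad Ups Lf gL"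
    unfolding Lf_def[abs_def] gL_def[abs_def] using sconv w_nonneg w_sum
    by (rule strongly_convex_grad_weighted_sum)
  have "Ups \<le> L"
    using grad_L lip_L sconv_L by (rule strongly_convex_grad_le_lipschitz)
  have "rho * L \<le> Ups"
    using rho L_pos by (simp add: field_simps)
  have c: "0 < c" "c \<le> 1"
    unfolding c_def by (fact inexact_rate_bounds[OF eps_loc rho(1) \<open>rho * L \<le> Ups\<close> Ups_pos \<open>Ups \<le> L\<close>])+
  have round: "Lf (theta (Suc n)) - Lf theta_star \<le> (1 - c) * (Lf (theta n) - Lf theta_star)" for n
    using inexact_federated_round_contraction[where A = "{1..M}" and d = "\<lambda>m. h m n",
        OF _ _ grad_L lip_L sconv_L grad lip sconv L_pos Ups_pos rho(1) \<open>rho * L \<le> Ups\<close> _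
        local_acc[of _ n, folded gL_def]] M_pos eps_loc
    unfolding update c_def by simp
  show ?thesis
    unfolding Lf_def[symmetric]
  proof (intro allI impI)
    fix n :: nat
    assume n: "2 * L\<^sup>2 / (Ups\<^sup>2 * rho * (1 - eps_loc)) * ln (1 / eps_uav) \<le> real n"
    show "Lf (theta n) - Lf theta_star \<le> eps_uav * (Lf (theta 0) - Lf theta_star)"
    proof (rule linear_convergence_after_rounds[where a = "\<lambda>n. Lf (theta n) - Lf theta_star", OF round c eps_uav(1)])
      show "0 \<le> Lf (theta 0) - Lf theta_star"
        using minimizer unfolding Lf_def by simp
      show "ln (1 / eps_uav) / c \<le> real n"
        using n round_count_ge_ln_div_rate[OF eps_loc rho(1) Ups_pos \<open>Ups \<le> L\<close> eps_uav]
        unfolding c_def by linarith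
    qed
  qed
qed

end
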